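(* Let $m\in\mathbb{N}$. There is a constant $C_m$ depending only on $m$ such that for all $0<\rho\le1$, $$I(\rho)=\frac1\rho\int_1^\infty e^{-\frac12 s^{1/\rho}}\,s^{\frac m\rho+1}\,ds\le C_m.$$ *)

theory Defs
  imports "HOL-Analysis.Analysis"
begin

definition I_integrand :: "nat \<Rightarrow> real \<Rightarrow> real \<Rightarrow> real" where
  "I_integrand m \<rho> s = exp (- (1/2) * s powr (1/\<rho>)) * s powr (real m / \<rho> + 1)"

definition I_rho :: "nat \<Rightarrow> real \<Rightarrow> real" where
  "I_rho m \<rho> = (1/\<rho>) * (LBINT s:{1..}. I_integrand m \<rho> s)"

end

theory Submission
  imports Defs
begin

text \<open>Substituting \<open>x = s powr (1/\<rho>)\<close>, the integrand is \<open>exp (-x/2) * x^(m+3)\<close> times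
  \<open>s powr (1 - 3/\<rho>)\<close>. The first factor is bounded by \<open>2^(m+3) * fact (m+3)\<close>, and the second
  has integral \<open>\<rho> / (3 - 2\<rho>)\<close> over \<open>[1, \<infinity>)\<close>, which cancels the prefactor \<open>1/\<rho>\<close> up to
  \<open>1 / (3 - 2\<rho>) \<le> 1\<close>.\<close>

lemma power_div_fact_le_exp:
  fixes x :: real
  assumes "0 \<le> x"
  shows "x ^ n / fact n \<le> exp x"
proof -
  have summable: "summable (\<lambda>k. x ^ k / fact k)"
    using summable_exp[of x] by (simp add: inverse_eq_divide)
  have "x ^ n / fact n \<le> (\<Sum>k<Suc n. x ^ k / fact k)"
    using assms by (simp add: sum_nonneg)
  also have "\<dots> \<le> (\<Sum>k. x ^ k / fact k)"
    by (rule sum_le_suminf[OF summable]) (use assms in auto)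
  also have "\<dots> = exp x"
    by (simp add: exp_def inverse_eq_divide)
  finally show ?thesis .
qed

lemma exp_neg_half_mult_power_le:
  fixes x :: real
  assumes "0 \<le> x"
  shows "exp (- (1/2) * x) * x ^ k \<le> 2 ^ k * fact k"
proof -
  have "(x/2) ^ k / fact k \<le> exp (x/2)"
    using power_div_fact_le_exp assms by simp
  then have "x ^ k \<le> 2 ^ k * fact k * exp (x/2)"
    by (simp add: field_simps power_divide)
  then have "exp (- (1/2) * x) * x ^ k \<le> exp (- (1/2) * x) * (2 ^ k * fact k * exp (x/2))"
    by (intro mult_left_mono) auto
  also have "\<dots> = 2 ^ k * fact k"
    by (simp add: exp_add[symmetric] mult.commute mult.left_commute)
  finally show ?thesis .
qed

lemma I_integrand_nonneg: "0 \<le> I_integrand m \<rho> s"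
  by (simp add: I_integrand_def)

lemma I_integrand_le_powr:
  assumes "0 < \<rho>" and "1 \<le> s"
  shows "I_integrand m \<rho> s \<le> 2 ^ (m+3) * fact (m+3) * s powr (1 - 3/\<rho>)"
proof -
  define x where "x = s powr (1/\<rho>)"
  have "1 \<le> x"
    unfolding x_def using assms by (simp add: ge_one_powr_ge_zero)
  have integrand_eq: "I_integrand m \<rho> s = exp (- (1/2) * x) * x ^ m * s"
    unfolding I_integrand_def x_def using assms(2)
    by (simp add: powr_add powr_powr powr_realpow[symmetric])
  have powr_eq: "s powr (1 - 3/\<rho>) = s / x ^ 3"
    unfolding x_def using assms(2)
    by (simp add: powr_diff powr_powr powr_realpow[symmetric])
  have "exp (- (1/2) * x) * x ^ (m+3) \<le> 2 ^ (m+3) * fact (m+3)"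
    using exp_neg_half_mult_power_le \<open>1 \<le> x\<close> by simp
  then have "exp (- (1/2) * x) * x ^ m * s \<le> 2 ^ (m+3) * fact (m+3) * (s / x ^ 3)"
    using \<open>1 \<le> x\<close> assms(2) by (simp add: field_simps power_add)
  then show ?thesis
    unfolding integrand_eq powr_eq .
qed

lemma
  fixes a e :: real
  assumes "e < -1" and "0 < a"
  shows set_integrable_powr_to_inf: "set_integrable lborel {a..} (\<lambda>x. x powr e)"
    and set_integral_powr_to_inf: "(LBINT x:{a..}. x powr e) = - (a powr (e+1)) / (e+1)"
proof -
  have has_integral: "((\<lambda>x. x powr e) has_integral - (a powr (e+1)) / (e+1)) {a..}"
    using has_integral_powr_to_inf[OF assms] .
  then have "(\<lambda>x. x powr e) absolutely_integrable_on {a..}"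
    by (intro nonnegative_absolutely_integrable_1) (auto simp: integrable_on_def)
  then have "set_integrable lebesgue {a..} (\<lambda>x. x powr e)"
    by (simp add: absolutely_integrable_on_def)
  then show integrable: "set_integrable lborel {a..} (\<lambda>x. x powr e)"
    unfolding set_integrable_def
    by (subst (asm) integrable_completion) (auto intro!: borel_measurable_indicator)
  show "(LBINT x:{a..}. x powr e) = - (a powr (e+1)) / (e+1)"
    using set_borel_integral_eq_integral(2)[OF integrable] integral_unique[OF has_integral]
    by simp
qed

lemma
  fixes f :: "real \<Rightarrow> real" and a e K :: real
  assumes "f \<in> borel_measurable borel" and "e < -1" and "0 < a"
    and bound: "\<And>x. a \<le> x \<Longrightarrow> \<bar>f x\<bar> \<le> K * x powr e"
  shows set_integrable_bounded_by_powr: "set_integrable lborel {a..} f"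
    and set_integral_le_by_powr: "(LBINT x:{a..}. f x) \<le> K * (- (a powr (e+1)) / (e+1))"
proof -
  have majorant: "set_integrable lborel {a..} (\<lambda>x. K * x powr e)"
    using set_integrable_powr_to_inf[OF assms(2,3)] by (rule set_integrable_mult_right)
  show integrable: "set_integrable lborel {a..} f"
  proof (rule set_integrable_bound[OF majorant])
    show "set_borel_measurable lborel {a..} f"
      unfolding set_borel_measurable_def using assms(1) by measurable
    show "AE x in lborel. x \<in> {a..} \<longrightarrow> norm (f x) \<le> norm (K * x powr e)"
      using bound by (intro AE_I2) force
  qed
  have "(LBINT x:{a..}. f x) \<le> (LBINT x:{a..}. K * x powr e)"
    using integrable majorant bound by (intro set_integral_mono) force+
  also have "\<dots> = K * (- (a powr (e+1)) / (e+1))"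
    using set_integral_powr_to_inf[OF assms(2,3)] by simp
  finally show "(LBINT x:{a..}. f x) \<le> K * (- (a powr (e+1)) / (e+1))" .
qed

theorem lemma4:
  fixes m :: nat
  shows "\<exists>C::real. \<forall>\<rho>::real. 0 < \<rho> \<and> \<rho> \<le> 1 \<longrightarrow>
           set_integrable lborel {1..} (I_integrand m \<rho>) \<and> I_rho m \<rho> \<le> C"
proof (intro exI allI impI conjI)
  define K :: real where "K = 2 ^ (m+3) * fact (m+3)"
  fix \<rho> :: real
  assume "0 < \<rho> \<and> \<rho> \<le> 1"
  then have "0 < \<rho>" "\<rho> \<le> 1" by auto
  have measurable: "I_integrand m \<rho> \<in> borel_measurable borel"
    unfolding I_integrand_def by measurable
  have exponent: "1 - 3/\<rho> < -1"
    using \<open>0 < \<rho>\<close> \<open>\<rho> \<le> 1\<close> by (simp add: field_simps)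
  have bound: "\<bar>I_integrand m \<rho> s\<bar> \<le> K * s powr (1 - 3/\<rho>)" if "1 \<le> s" for s
    using I_integrand_le_powr[OF \<open>0 < \<rho>\<close> that] I_integrand_nonneg by (simp add: K_def)
  show "set_integrable lborel {1..} (I_integrand m \<rho>)"
    using set_integrable_bounded_by_powr[OF measurable exponent _ bound] by simp
  have "I_rho m \<rho> \<le> 1/\<rho> * (K * (- (1 powr (1 - 3/\<rho> + 1)) / (1 - 3/\<rho> + 1)))"
    unfolding I_rho_def using \<open>0 < \<rho>\<close>
    by (intro mult_left_mono set_integral_le_by_powr[OF measurable exponent _ bound]) auto
  also have "\<dots> = K / (3 - 2*\<rho>)"
    using \<open>0 < \<rho>\<close> \<open>\<rho> \<le> 1\<close> by (simp add: field_simps)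
  also have "\<dots> \<le> K"
    using \<open>0 < \<rho>\<close> \<open>\<rho> \<le> 1\<close> by (simp add: K_def field_simps mult_left_le)
  finally show "I_rho m \<rho> \<le> K" .
qed

end
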